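(* Let $n\ge1$ and $s\ge 0$, and assume either $n$ is even and $s\le n$, or $n$ is odd and $s\le n-1$. Let $e$ be the greatest even integer with $e\le s$. Then $$\max\{\operatorname{per}(I-A): A\in\tilde\omega_n^s\}=2^{e/2}\Big[1+\Big(\frac{s-e}{2}\Big)^2\Big].$$ Moreover the maximum is attained by the doubly substochastic matrix $M_2\oplus\cdots\oplus M_2\oplus S_2\oplus\mathbf 0_{n-e-2}$ (with $e/2$ copies of $M_2$; when $s=e$ the factors $S_2$ and zero block may be replaced by $\mathbf 0_{n-e}$), where $M_2=\begin{pmatrix}0&1\\1&0\end{pmatrix}$ and $S_2=\begin{pmatrix}0&\frac{s-e}{2}\\\frac{s-e}{2}&0\end{pmatrix}$.
   Context: An $n\times n$ matrix is row substochastic if all entries are nonnegative and each row sum is at most $1$; doubly substochastic if additionally each column sum is at most $1$. $\sigma(A)$ is the sum of all entries of $A$, and $\tilde\omega_n^s$ is the set of $n\times n$ row substochastic matrices $A$ with $\sigma(A)=s$. $\oplus$ is block-diagonal direct sum, $\mathbf 0_m$ the $m\times m$ zero matrix. The permanent is $\operatorname{per}(M)=\sum_{\pi\in S_n}\prod_i m_{i\pi(i)}$, and $I$ is the identity matrix. *)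

theory Defs
  imports Complex_Main "HOL-Combinatorics.Permutations"
begin

text \<open>Square n-by-n real matrices are represented as functions nat \<Rightarrow> nat \<Rightarrow> real,
  of which only the entries with indices below n are relevant (indices 0..n-1).\<close>

type_synonym mat = "nat \<Rightarrow> nat \<Rightarrow> real"

definition row_substochastic :: "nat \<Rightarrow> mat \<Rightarrow> bool" where
  "row_substochastic n A \<longleftrightarrow>
     (\<forall>i<n. \<forall>j<n. 0 \<le> A i j) \<and> (\<forall>i<n. (\<Sum>j<n. A i j) \<le> 1)"

definition doubly_substochastic :: "nat \<Rightarrow> mat \<Rightarrow> bool" where
  "doubly_substochastic n A \<longleftrightarrow>
     row_substochastic n A \<and> (\<forall>j<n. (\<Sum>i<n. A i j) \<le> 1)"

definition msum :: "nat \<Rightarrow> mat \<Rightarrow> real" where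
  "msum n A = (\<Sum>i<n. \<Sum>j<n. A i j)"

definition tilde_omega :: "nat \<Rightarrow> real \<Rightarrow> mat set" where
  "tilde_omega n s = {A. row_substochastic n A \<and> msum n A = s}"

definition per :: "nat \<Rightarrow> mat \<Rightarrow> real" where
  "per n M = (\<Sum>p | p permutes {..<n}. \<Prod>i<n. M i (p i))"

definition idm :: mat where
  "idm i j = (if i = j then 1 else 0)"

definition msub :: "mat \<Rightarrow> mat \<Rightarrow> mat" where
  "msub A B i j = A i j - B i j"

definition dsum :: "nat \<Rightarrow> mat \<Rightarrow> mat \<Rightarrow> mat" where
  "dsum m A B i j =
     (if i < m \<and> j < m then A i j
      else if m \<le> i \<and> m \<le> j then B (i - m) (j - m) else 0)"

definition zero_mat :: mat where
  "zero_mat i j = 0"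

definition M2 :: mat where
  "M2 i j = (if i < 2 \<and> j < 2 \<and> i \<noteq> j then 1 else 0)"

definition S2 :: "real \<Rightarrow> mat" where
  "S2 c i j = (if i < 2 \<and> j < 2 \<and> i \<noteq> j then c else 0)"

fun copies2 :: "nat \<Rightarrow> mat \<Rightarrow> mat \<Rightarrow> mat" where
  "copies2 0 B C = C"
| "copies2 (Suc k) B C = dsum 2 B (copies2 k B C)"

definition greatest_even_le :: "real \<Rightarrow> int" where
  "greatest_even_le s = (GREATEST k::int. even k \<and> real_of_int k \<le> s)"

end

theory Submission
  imports Defs
begin

text \<open>
  Each entry of \<open>I - A\<close> is bounded in absolute value by the corresponding entry of the matrix
  with unit diagonal and the off-diagonal part of \<open>A\<close>, so it suffices to bound the permanent of
  the latter by \<open>f(t)\<close>, where \<open>t \<le> s\<close> is the off-diagonal mass of \<open>A\<close> and the monotone bound is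
  \<open>f(x) = 2^\<lfloor>x/2\<rfloor> (1 + (x/2 - \<lfloor>x/2\<rfloor>)\<^sup>2)\<close>. The permanent is affine in each row, and an
  off-diagonal row of mass \<open>r\<close> is a convex combination of rows carrying all of \<open>r\<close> in one entry;
  so we may assume each row \<open>i\<close> has a single off-diagonal entry \<open>r\<^sub>i\<close>, in column \<open>\<phi> i\<close>. Then a
  column without off-diagonal entry is split off, and otherwise \<open>\<phi>\<close> is a permutation and
  contracting an edge \<open>a \<rightarrow> \<phi> a\<close> leads to smaller instances; the two-cycle estimate
  \<open>(1 + ab) f(R) \<le> f(a + b + R)\<close> closes the induction.
\<close>

definition per_on :: "nat set \<Rightarrow> mat \<Rightarrow> real" where
  "per_on S M = (\<Sum>p | p permutes S. \<Prod>i\<in>S. M i (p i))"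

lemma per_eq_per_on: "per n M = per_on {..<n} M"
  by (simp add: per_def per_on_def)

lemma per_on_empty [simp]: "per_on {} M = 1"
  by (simp add: per_on_def)

lemma per_on_cong:
  assumes "\<And>i k. i \<in> S \<Longrightarrow> k \<in> S \<Longrightarrow> M i k = N i k"
  shows "per_on S M = per_on S N"
  unfolding per_on_def
proof (rule sum.cong[OF refl])
  fix p assume "p \<in> {p. p permutes S}"
  then have p: "p permutes S" by simp
  show "(\<Prod>i\<in>S. M i (p i)) = (\<Prod>i\<in>S. N i (p i))"
    by (rule prod.cong[OF refl]) (simp add: assms permutes_in_image[OF p])
qed

lemma per_on_zero_col:
  assumes "finite S" "b \<in> S" "\<And>k. k \<in> S \<Longrightarrow> M k b = 0"
  shows "per_on S M = 0"
  unfolding per_on_def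
proof (rule sum.neutral, rule ballI)
  fix p assume "p \<in> {p. p permutes S}"
  then have p: "p permutes S" by simp
  have "inv p b \<in> S" using permutes_in_image[OF permutes_inv[OF p]] assms(2) by simp
  moreover have "p (inv p b) = b" using permutes_inverses(1)[OF p] by simp
  ultimately show "(\<Prod>i\<in>S. M i (p i)) = 0"
    using assms by (intro prod_zero) (auto intro!: bexI[of _ "inv p b"])
qed

definition replace_col :: "mat \<Rightarrow> nat \<Rightarrow> nat \<Rightarrow> mat" where
  "replace_col M a b = (\<lambda>i k. if k = b then M i a else M i k)"

text \<open>Laplace expansion along row \<open>a\<close>; the minor for column \<open>b\<close> is indexed by \<open>S\<close>, with column \<open>a\<close>
  taking the place of column \<open>b\<close>.\<close>
lemma per_on_insert:
  assumes fS: "finite S" and aS: "a \<notin> S"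
  shows "per_on (insert a S) M = M a a * per_on S M + (\<Sum>b\<in>S. M a b * per_on S (replace_col M a b))"
proof -
  have "per_on (insert a S) M =
     (\<Sum>b\<in>insert a S. \<Sum>q | q permutes S. \<Prod>i\<in>insert a S. M i ((transpose a b \<circ> q) i))"
    unfolding per_on_def by (rule sum_over_permutations_insert[OF fS aS])
  also have "\<dots> = (\<Sum>b\<in>insert a S. M a b * per_on S (replace_col M a b))"
  proof (rule sum.cong[OF refl])
    fix b
    have "(\<Prod>i\<in>insert a S. M i ((transpose a b \<circ> q) i)) = M a b * (\<Prod>i\<in>S. replace_col M a b i (q i))"
      if q: "q permutes S" for q
    proof -
      have "q a = a" using q aS by (simp add: permutes_def)
      then have "(\<Prod>i\<in>insert a S. M i ((transpose a b \<circ> q) i))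
          = M a b * (\<Prod>i\<in>S. M i ((transpose a b \<circ> q) i))"
        using fS aS by simp
      also have "(\<Prod>i\<in>S. M i ((transpose a b \<circ> q) i)) = (\<Prod>i\<in>S. replace_col M a b i (q i))"
      proof (rule prod.cong[OF refl])
        fix i assume "i \<in> S"
        then have "q i \<noteq> a" using permutes_in_image[OF q] aS by auto
        then show "M i ((transpose a b \<circ> q) i) = replace_col M a b i (q i)"
          by (auto simp: replace_col_def transpose_def)
      qed
      finally show ?thesis .
    qed
    then show "(\<Sum>q | q permutes S. \<Prod>i\<in>insert a S. M i ((transpose a b \<circ> q) i))
        = M a b * per_on S (replace_col M a b)"
      by (simp add: per_on_def sum_distrib_left)
  qed
  also have "\<dots> = M a a * per_on S (replace_col M a a) + (\<Sum>b\<in>S. M a b * per_on S (replace_col M a b))"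
    using fS aS by simp
  also have "replace_col M a a = M" by (auto simp: replace_col_def fun_eq_iff)
  finally show ?thesis .
qed

lemma per_on_remove_col:
  assumes fS: "finite S" and jS: "j \<in> S" and z: "\<And>k. k \<in> S \<Longrightarrow> k \<noteq> j \<Longrightarrow> M k j = 0"
  shows "per_on S M = M j j * per_on (S - {j}) M"
proof -
  have S: "S = insert j (S - {j})" using jS by auto
  have "per_on S M = M j j * per_on (S - {j}) M
      + (\<Sum>b\<in>S-{j}. M j b * per_on (S-{j}) (replace_col M j b))"
    by (subst S, rule per_on_insert) (use fS in auto)
  also have "(\<Sum>b\<in>S-{j}. M j b * per_on (S-{j}) (replace_col M j b)) = 0"
  proof (rule sum.neutral, rule ballI)
    fix b assume b: "b \<in> S - {j}"
    have "per_on (S-{j}) (replace_col M j b) = 0"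
      by (rule per_on_zero_col[of _ b]) (use fS b z in \<open>auto simp: replace_col_def\<close>)
    then show "M j b * per_on (S-{j}) (replace_col M j b) = 0" by simp
  qed
  finally show ?thesis by simp
qed

lemma per_on_diagonal:
  assumes "finite S" and "\<And>i k. i \<in> S \<Longrightarrow> k \<in> S \<Longrightarrow> i \<noteq> k \<Longrightarrow> X i k = 0"
  shows "per_on S X = (\<Prod>i\<in>S. X i i)"
  using assms
proof (induction S rule: finite_induct)
  case (insert x F)
  have "per_on (insert x F) X = X x x * per_on (insert x F - {x}) X"
    by (rule per_on_remove_col) (use insert in auto)
  also have "insert x F - {x} = F" using insert by auto
  finally show ?case using insert by simp
qed simp

lemma per_on_diag_entry:
  assumes fT: "finite T" and jT: "j \<in> T"
  shows "per_on T X = per_on T (X(j := (X j)(j := y))) - (y - X j j) * per_on (T - {j}) X"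
proof -
  let ?Y = "X(j := (X j)(j := y))"
  have T: "T = insert j (T - {j})" using jT by auto
  have "per_on T M = M j j * per_on (T - {j}) M
      + (\<Sum>b\<in>T-{j}. M j b * per_on (T-{j}) (replace_col M j b))" for M
    by (subst T, rule per_on_insert) (use fT in auto)
  moreover have "per_on (T - {j}) ?Y = per_on (T - {j}) X"
    by (rule per_on_cong) auto
  moreover have "(\<Sum>b\<in>T-{j}. ?Y j b * per_on (T-{j}) (replace_col ?Y j b))
      = (\<Sum>b\<in>T-{j}. X j b * per_on (T-{j}) (replace_col X j b))"
    by (intro sum.cong refl arg_cong2[where f = "(*)"] per_on_cong) (auto simp: replace_col_def)
  ultimately show ?thesis by (simp add: algebra_simps)
qed

lemma per_on_row_linear:
  assumes fS: "finite S" and iS: "i \<in> S"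
    and row: "\<And>l. l \<in> S \<Longrightarrow> X i l = (\<Sum>k\<in>K. w k * Y k i l)"
    and other: "\<And>k m l. k \<in> K \<Longrightarrow> m \<in> S \<Longrightarrow> m \<noteq> i \<Longrightarrow> l \<in> S \<Longrightarrow> Y k m l = X m l"
  shows "per_on S X = (\<Sum>k\<in>K. w k * per_on S (Y k))"
proof -
  have "(\<Prod>m\<in>S. X m (p m)) = (\<Sum>k\<in>K. w k * (\<Prod>m\<in>S. Y k m (p m)))" if p: "p permutes S" for p
  proof -
    have pin: "\<And>m. m \<in> S \<Longrightarrow> p m \<in> S" using permutes_in_image[OF p] by simp
    have "(\<Prod>m\<in>S. X m (p m)) = X i (p i) * (\<Prod>m\<in>S-{i}. X m (p m))"
      using fS iS by (simp add: prod.remove)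
    also have "\<dots> = (\<Sum>k\<in>K. w k * Y k i (p i) * (\<Prod>m\<in>S-{i}. Y k m (p m)))"
      unfolding row[OF pin[OF iS]] sum_distrib_right
      using other pin by (intro sum.cong refl arg_cong2[where f = "(*)"] prod.cong) auto
    also have "\<dots> = (\<Sum>k\<in>K. w k * (\<Prod>m\<in>S. Y k m (p m)))"
      using fS iS by (simp add: prod.remove mult.assoc)
    finally show ?thesis .
  qed
  then have "per_on S X = (\<Sum>p | p permutes S. \<Sum>k\<in>K. w k * (\<Prod>m\<in>S. Y k m (p m)))"
    unfolding per_on_def by (intro sum.cong) auto
  also have "\<dots> = (\<Sum>k\<in>K. w k * per_on S (Y k))"
    by (subst sum.swap) (simp add: per_on_def sum_distrib_left)
  finally show ?thesis .
qed

lemma per_on_pair: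
  assumes fS: "finite S" and aS: "a \<in> S" and bS: "b \<in> S" and ab: "a \<noteq> b"
    and ra: "\<And>k. k \<in> S \<Longrightarrow> k \<noteq> a \<Longrightarrow> k \<noteq> b \<Longrightarrow> X a k = 0"
    and ca: "\<And>k. k \<in> S \<Longrightarrow> k \<noteq> a \<Longrightarrow> k \<noteq> b \<Longrightarrow> X k a = 0"
    and cb: "\<And>k. k \<in> S \<Longrightarrow> k \<noteq> a \<Longrightarrow> k \<noteq> b \<Longrightarrow> X k b = 0"
  shows "per_on S X = (X a a * X b b + X a b * X b a) * per_on (S - {a, b}) X"
proof -
  define T where "T = S - {a}"
  have fT: "finite T" "a \<notin> T" "b \<in> T" using fS bS ab by (auto simp: T_def)
  have S: "S = insert a T" using aS by (auto simp: T_def)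
  have TB: "T - {b} = S - {a, b}" by (auto simp: T_def)
  have "per_on S X = X a a * per_on T X + (\<Sum>l\<in>T. X a l * per_on T (replace_col X a l))"
    unfolding S by (rule per_on_insert) (use fT in auto)
  also have "(\<Sum>l\<in>T. X a l * per_on T (replace_col X a l))
      = (\<Sum>l\<in>T. if l = b then X a b * per_on T (replace_col X a b) else 0)"
    by (rule sum.cong) (auto simp: T_def ra)
  also have "\<dots> = X a b * per_on T (replace_col X a b)" using fT by simp
  also have "per_on T X = X b b * per_on (T - {b}) X"
    by (rule per_on_remove_col) (use fT cb in \<open>auto simp: T_def\<close>)
  also have "per_on T (replace_col X a b) = X b a * per_on (T - {b}) (replace_col X a b)"
    by (subst per_on_remove_col) (use fT ca in \<open>auto simp: T_def replace_col_def\<close>)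
  also have "per_on (T - {b}) (replace_col X a b) = per_on (T - {b}) X"
    by (rule per_on_cong) (auto simp: replace_col_def)
  finally show ?thesis unfolding TB by (simp add: algebra_simps)
qed

definition per_bound :: "real \<Rightarrow> real" where
  "per_bound x = 2 ^ nat \<lfloor>x/2\<rfloor> * (1 + (x/2 - \<lfloor>x/2\<rfloor>)^2)"

lemma greatest_even_le_eq: "greatest_even_le x = 2 * \<lfloor>x/2\<rfloor>"
  unfolding greatest_even_le_def
proof (rule Greatest_equality)
  show "even (2 * \<lfloor>x / 2\<rfloor>) \<and> real_of_int (2 * \<lfloor>x / 2\<rfloor>) \<le> x"
    by (simp; linarith)
  fix y :: int assume "even y \<and> real_of_int y \<le> x"
  then obtain z where y: "y = 2 * z" and "real_of_int z \<le> x / 2" by (auto elim: evenE)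
  then show "y \<le> 2 * \<lfloor>x / 2\<rfloor>" by (simp add: le_floor_iff)
qed

lemma per_bound_ge_one: "0 \<le> x \<Longrightarrow> 1 \<le> per_bound x"
  unfolding per_bound_def by (simp add: one_le_power[of 2] mult_ge1_I)

lemma per_bound_mono:
  assumes "0 \<le> x" "x \<le> y"
  shows "per_bound x \<le> per_bound y"
proof -
  define m m' where "m = \<lfloor>x/2\<rfloor>" and "m' = \<lfloor>y/2\<rfloor>"
  define u u' where "u = x/2 - m" and "u' = y/2 - m'"
  have m0: "0 \<le> m" using assms unfolding m_def by simp
  have mm: "m \<le> m'" unfolding m_def m'_def using assms by (intro floor_mono) simp
  have u: "0 \<le> u" "u < 1" "0 \<le> u'" unfolding u_def m_def u'_def m'_def by linarith+
  have fx: "per_bound x = 2 ^ nat m * (1 + u^2)" and fy: "per_bound y = 2 ^ nat m' * (1 + u'^2)"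
    unfolding per_bound_def m_def u_def m'_def u'_def by simp_all
  show ?thesis
  proof (cases "m = m'")
    case True
    then have "u \<le> u'" unfolding u_def u'_def using assms by simp
    then have "u^2 \<le> u'^2" using u by (intro power_mono) auto
    then show ?thesis unfolding fx fy True by simp
  next
    case False
    then have "nat m + 1 \<le> nat m'" using mm m0 by linarith
    have "2 ^ nat m * (1 + u^2) \<le> (2::real) ^ nat m * 2"
      using u by (intro mult_left_mono) (auto simp: power_le_one)
    also have "\<dots> \<le> 2 ^ nat m'"
      using \<open>nat m + 1 \<le> nat m'\<close> power_increasing[of "nat m + 1" "nat m'" "2::real"] by simp
    also have "\<dots> \<le> 2 ^ nat m' * (1 + u'^2)" by simp
    finally show ?thesis unfolding fx fy .
  qed
qed

lemma pair_merge_ineq: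
  fixes u v :: real
  assumes "0 \<le> u" "u \<le> 1" "0 \<le> v" "v \<le> 1" "1 \<le> u + v"
  shows "(1 + v^2) * (1 + u^2) \<le> 2 * (1 + (u + v - 1)^2)"
proof -
  have "0 \<le> (1 - u) * (1 - v)" "u * v \<le> 1" using assms by (simp_all add: mult_le_one)
  then have "0 \<le> (u*v - (u+v-1)) * (2 - u*v - (u+v-1))"
    using assms by (intro mult_nonneg_nonneg) (auto simp: algebra_simps)
  then show ?thesis by (simp add: power2_eq_square algebra_simps)
qed

lemma per_bound_add_square:
  assumes "0 \<le> v" "v \<le> 1" "0 \<le> R"
  shows "(1 + v^2) * per_bound R \<le> per_bound (2*v + R)"
proof -
  define m where "m = \<lfloor>R/2\<rfloor>"
  define u where "u = R/2 - m"
  have m0: "0 \<le> m" using assms unfolding m_def by simp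
  have u: "0 \<le> u" "u < 1" unfolding u_def m_def by linarith+
  have fR: "per_bound R = 2 ^ nat m * (1 + u^2)" unfolding per_bound_def m_def u_def ..
  have half: "(2*v + R)/2 = m + (u + v)" unfolding u_def using assms by simp
  show ?thesis
  proof (cases "u + v < 1")
    case True
    then have "\<lfloor>m + (u + v)\<rfloor> = m" using u assms by (simp add: floor_eq_iff)
    then have f2: "per_bound (2*v+R) = 2 ^ nat m * (1 + (u+v)^2)"
      unfolding per_bound_def half by simp
    have "(u*v) * (u*v) \<le> 1 * (u * v)"
      using u assms mult_le_one[of u v] by (intro mult_right_mono) auto
    moreover have "0 \<le> u * v" using u assms by simp
    ultimately have "(1 + v^2) * (1 + u^2) \<le> 1 + (u+v)^2"
      by (simp add: power2_eq_square algebra_simps)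
    then show ?thesis unfolding fR f2 by simp
  next
    case False
    then have "\<lfloor>m + (u + v)\<rfloor> = m + 1" using u assms by (simp add: floor_eq_iff)
    then have f2: "per_bound (2*v+R) = 2 ^ Suc (nat m) * (1 + (u+v-1)^2)"
      unfolding per_bound_def half using m0 by (simp add: nat_add_distrib)
    have "(1 + v^2) * (1 + u^2) \<le> 2 * (1 + (u + v - 1)^2)"
      using pair_merge_ineq[of u v] u assms False by simp
    then show ?thesis unfolding fR f2 by simp
  qed
qed

lemma per_bound_two_cycle:
  assumes "0 \<le> a" "a \<le> 1" "0 \<le> b" "b \<le> 1" "0 \<le> R"
  shows "(1 + a*b) * per_bound R \<le> per_bound (a + b + R)"
proof -
  have "a * b \<le> ((a+b)/2)^2"
    using sum_squares_ge_zero[of "a-b" 0] by (simp add: power2_eq_square field_simps)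
  then have "(1 + a*b) * per_bound R \<le> (1 + ((a+b)/2)^2) * per_bound R"
    using per_bound_ge_one[OF assms(5)] by (intro mult_right_mono) auto
  also have "\<dots> \<le> per_bound (2*((a+b)/2) + R)" using assms by (intro per_bound_add_square) auto
  also have "2*((a+b)/2) + R = a + b + R" by simp
  finally show ?thesis .
qed

definition func_mat :: "(nat \<Rightarrow> nat) \<Rightarrow> (nat \<Rightarrow> real) \<Rightarrow> mat" where
  "func_mat \<phi> r i k = (if i = k then 1 else if k = \<phi> i then r i else 0)"

text \<open>Contracting the edge \<open>a \<rightarrow> j\<close> of the digraph of \<open>\<phi>\<close>, where \<open>a\<close> is the only predecessor of \<open>j\<close>:
  the vertex \<open>a\<close> disappears, its predecessors are redirected to \<open>j\<close>, and a two-cycle \<open>a \<leftrightarrow> j\<close>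
  turns into a loop, i.e. the weight of \<open>j\<close> is dropped.\<close>
lemma per_on_func_mat_contract:
  fixes r :: "nat \<Rightarrow> real"
  assumes fS: "finite S" and aS: "a \<in> S" and jS: "j \<in> S" and aj: "a \<noteq> j" and pa: "\<phi> a = j"
    and uniq: "\<And>k. k \<in> S \<Longrightarrow> \<phi> k = j \<Longrightarrow> k = a"
  defines "t \<equiv> if \<phi> j = a then r j else 0"
  shows "per_on S (func_mat \<phi> r) = (1 - r a + r a * t) * per_on (S - {a, j}) (func_mat \<phi> r)
    + r a * per_on (S - {a})
        (func_mat (\<lambda>k. if \<phi> k = a then j else \<phi> k) (\<lambda>k. if k = j \<and> \<phi> j = a then 0 else r k))"
    (is "_ = _ + r a * per_on _ (func_mat ?\<phi>' ?r')")
proof -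
  let ?M = "func_mat \<phi> r"
  define T where "T = S - {a}"
  have fT: "finite T" and jT: "j \<in> T" and aT: "a \<notin> T" and S: "S = insert a T"
    using fS jS aj aS by (auto simp: T_def)
  have Tj: "T - {j} = S - {a, j}" by (auto simp: T_def)
  define Mj where "Mj = replace_col ?M a j"
  have row_a: "per_on S ?M = per_on T ?M + r a * per_on T Mj"
  proof -
    have "per_on S ?M = ?M a a * per_on T ?M + (\<Sum>b\<in>T. ?M a b * per_on T (replace_col ?M a b))"
      unfolding S by (rule per_on_insert[OF fT aT])
    also have "(\<Sum>b\<in>T. ?M a b * per_on T (replace_col ?M a b))
        = (\<Sum>b\<in>T. if b = j then r a * per_on T Mj else 0)"
      by (rule sum.cong) (use aj aT in \<open>auto simp: func_mat_def pa Mj_def\<close>)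
    also have "\<dots> = r a * per_on T Mj" using fT jT by simp
    moreover have "?M a a = 1" by (simp add: func_mat_def)
    ultimately show ?thesis by simp
  qed
  have col_j: "per_on T ?M = per_on (T - {j}) ?M"
    using per_on_remove_col[OF fT jT, of ?M] uniq by (force simp: func_mat_def T_def)
  have "Mj j j = t" using aj by (auto simp: Mj_def replace_col_def func_mat_def t_def)
  then have "per_on T Mj = per_on T (Mj(j := (Mj j)(j := 1))) - (1 - t) * per_on (T - {j}) Mj"
    using per_on_diag_entry[OF fT jT, of Mj 1] by simp
  moreover have "per_on (T - {j}) Mj = per_on (T - {j}) ?M"
    by (rule per_on_cong) (auto simp: Mj_def replace_col_def)
  moreover have "per_on T (Mj(j := (Mj j)(j := 1))) = per_on T (func_mat ?\<phi>' ?r')"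
  proof (rule per_on_cong)
    fix i k assume "i \<in> T" "k \<in> T"
    then have "i \<noteq> a" "k \<noteq> a" "i \<in> S" by (auto simp: T_def)
    then show "(Mj(j := (Mj j)(j := 1))) i k = func_mat ?\<phi>' ?r' i k"
      using uniq[of i] by (auto simp: Mj_def replace_col_def func_mat_def)
  qed
  ultimately have "per_on T Mj = per_on T (func_mat ?\<phi>' ?r') - (1 - t) * per_on (S - {a, j}) ?M"
    using Tj by simp
  then have "per_on S ?M = per_on (S - {a, j}) ?M
      + r a * (per_on T (func_mat ?\<phi>' ?r') - (1 - t) * per_on (S - {a, j}) ?M)"
    using row_a col_j Tj by simp
  then show ?thesis by (simp add: T_def algebra_simps)
qed

lemma per_bound_contract:
  assumes "0 \<le> a" "a \<le> 1" "0 \<le> b" "b \<le> 1" "0 \<le> R" "t = 0 \<or> t = b"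
  shows "(1 - a + a * t) * per_bound R + a * per_bound (b + R - t) \<le> per_bound (a + b + R)"
  using assms(6)
proof
  assume "t = 0"
  have "per_bound R \<le> per_bound (a + b + R)" "per_bound (b + R) \<le> per_bound (a + b + R)"
    using assms by (intro per_bound_mono; simp)+
  then have "(1 - a) * per_bound R + a * per_bound (b + R)
      \<le> (1 - a) * per_bound (a + b + R) + a * per_bound (a + b + R)"
    using assms by (intro add_mono mult_left_mono) auto
  then show ?thesis using \<open>t = 0\<close> by (simp add: algebra_simps)
next
  assume "t = b"
  then have "(1 - a + a * t) * per_bound R + a * per_bound (b + R - t) = (1 + a * b) * per_bound R"
    by (simp add: algebra_simps)
  also have "\<dots> \<le> per_bound (a + b + R)" using per_bound_two_cycle assms by blast
  finally show ?thesis .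
qed

lemma per_on_func_mat_remove_source:
  assumes "finite S" "j \<in> S" "\<And>k. k \<in> S \<Longrightarrow> k \<noteq> j \<Longrightarrow> \<phi> k \<noteq> j"
  shows "per_on S (func_mat \<phi> r) = per_on (S - {j}) (func_mat \<phi> r)"
  using per_on_remove_col[OF assms(1,2), of "func_mat \<phi> r"] assms(3) by (force simp: func_mat_def)

lemma unique_pred_if_no_source:
  assumes "finite S" "j \<in> S" and onto: "\<And>j. j \<in> S \<Longrightarrow> \<exists>k\<in>S. k \<noteq> j \<and> \<phi> k = j"
  obtains a where "a \<in> S" "a \<noteq> j" "\<phi> a = j" "\<And>k. k \<in> S \<Longrightarrow> \<phi> k = j \<Longrightarrow> k = a"
proof -
  have "S \<subseteq> \<phi> ` S" using onto by (metis image_eqI subsetI)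
  then have "inj_on \<phi> S"
    using assms card_image_le[of S \<phi>] card_mono[of "\<phi> ` S" S]
    by (intro eq_card_imp_inj_on) (auto simp: le_antisym)
  moreover obtain a where "a \<in> S" "a \<noteq> j" "\<phi> a = j" using onto assms(2) by blast
  ultimately show ?thesis using that by (metis inj_on_eq_iff)
qed

lemma per_on_func_mat_le:
  assumes "finite S" "\<And>i. i \<in> S \<Longrightarrow> 0 \<le> r i \<and> r i \<le> 1"
  shows "per_on S (func_mat \<phi> r) \<le> per_bound (\<Sum>i\<in>S. r i)"
  using assms
proof (induction "card S" arbitrary: S \<phi> r rule: less_induct)
  case less
  note fS = less.prems(1) and rS = less.prems(2)
  let ?M = "func_mat \<phi> r"
  consider "S = {}" | j where "j \<in> S" "\<And>k. k \<in> S \<Longrightarrow> k \<noteq> j \<Longrightarrow> \<phi> k \<noteq> j"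
    | j where "j \<in> S" "\<And>j. j \<in> S \<Longrightarrow> \<exists>k\<in>S. k \<noteq> j \<and> \<phi> k = j"
    by blast
  then show ?case
  proof cases
    case 1
    then show ?thesis using per_bound_ge_one[of 0] by simp
  next
    case (2 j)
    have "per_on S ?M = per_on (S - {j}) ?M"
      using per_on_func_mat_remove_source[OF fS 2] .
    also have "\<dots> \<le> per_bound (\<Sum>i\<in>S-{j}. r i)"
      using less.hyps[of "S - {j}" r \<phi>] fS 2 rS card_Diff1_less[OF fS \<open>j \<in> S\<close>] by simp
    also have "\<dots> \<le> per_bound (\<Sum>i\<in>S. r i)"
      using fS rS by (intro per_bound_mono sum_nonneg sum_mono2) auto
    finally show ?thesis .
  next
    case (3 j)
    obtain a where aS: "a \<in> S" and aj: "a \<noteq> j" and pa: "\<phi> a = j"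
      and uniq: "\<And>k. k \<in> S \<Longrightarrow> \<phi> k = j \<Longrightarrow> k = a"
      using unique_pred_if_no_source[OF fS 3] by blast
    define t where "t = (if \<phi> j = a then r j else 0)"
    define \<phi>' where "\<phi>' = (\<lambda>k. if \<phi> k = a then j else \<phi> k)"
    define r' where "r' = (\<lambda>k. if k = j \<and> \<phi> j = a then 0 else r k)"
    define R where "R = (\<Sum>i\<in>S-{a,j}. r i)"
    have ra: "0 \<le> r a" "r a \<le> 1" and rj: "0 \<le> r j" "r j \<le> 1" using rS aS 3 by auto
    have Saj: "S - {a, j} = S - {a} - {j}" by auto
    have sum_r: "(\<Sum>i\<in>S. r i) = r a + r j + R"
      using fS aS 3 aj by (simp add: R_def Saj sum.remove)
    have "(\<Sum>i\<in>S-{a}. r' i) = r' j + (\<Sum>i\<in>S-{a,j}. r' i)"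
      using fS 3 aj by (simp add: Saj sum.remove)
    also have "(\<Sum>i\<in>S-{a,j}. r' i) = R" unfolding R_def by (rule sum.cong) (auto simp: r'_def)
    finally have sum_r': "(\<Sum>i\<in>S-{a}. r' i) = r j + R - t" by (simp add: r'_def t_def)
    have "per_on S ?M = (1 - r a + r a * t) * per_on (S - {a, j}) ?M
        + r a * per_on (S - {a}) (func_mat \<phi>' r')"
      unfolding t_def \<phi>'_def r'_def using fS aS 3(1) aj pa uniq by (rule per_on_func_mat_contract)
    also have "\<dots> \<le> (1 - r a + r a * t) * per_bound R + r a * per_bound (r j + R - t)"
    proof (intro add_mono mult_left_mono)
      show "per_on (S - {a, j}) ?M \<le> per_bound R"
        using less.hyps[of "S - {a, j}" r \<phi>] psubset_card_mono[of S "S - {a, j}"] fS rS aS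
        by (auto simp: R_def)
      show "per_on (S - {a}) (func_mat \<phi>' r') \<le> per_bound (r j + R - t)"
        using less.hyps[of "S - {a}" r' \<phi>'] card_Diff1_less[OF fS aS] fS rS sum_r'
        by (auto simp: r'_def)
    qed (use ra rj in \<open>auto simp: t_def\<close>)
    also have "\<dots> \<le> per_bound (\<Sum>i\<in>S. r i)"
      unfolding sum_r R_def using ra rj rS by (intro per_bound_contract sum_nonneg) (auto simp: t_def)
    finally show ?thesis .
  qed
qed

definition unit_diag :: "mat \<Rightarrow> mat" where
  "unit_diag A = (\<lambda>i k. if i = k then 1 else A i k)"

definition offdiag_sum :: "nat set \<Rightarrow> mat \<Rightarrow> real" where
  "offdiag_sum S A = (\<Sum>i\<in>S. \<Sum>k\<in>S-{i}. A i k)"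

definition single_offdiag_row :: "nat set \<Rightarrow> mat \<Rightarrow> nat \<Rightarrow> bool" where
  "single_offdiag_row S A i \<longleftrightarrow> (\<exists>c. \<forall>k\<in>S. k \<noteq> i \<longrightarrow> k \<noteq> c \<longrightarrow> A i k = 0)"

definition concentrate_row :: "nat set \<Rightarrow> mat \<Rightarrow> nat \<Rightarrow> nat \<Rightarrow> mat" where
  "concentrate_row S A i k = A(i := (\<lambda>l. if l = k then (\<Sum>m\<in>S-{i}. A i m) else 0))"

lemma per_on_unit_diag_single_offdiag_le:
  assumes fS: "finite S"
    and nn: "\<And>i k. i \<in> S \<Longrightarrow> k \<in> S \<Longrightarrow> i \<noteq> k \<Longrightarrow> 0 \<le> A i k"
    and rs: "\<And>i. i \<in> S \<Longrightarrow> (\<Sum>k\<in>S-{i}. A i k) \<le> 1"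
    and single: "\<And>i. i \<in> S \<Longrightarrow> single_offdiag_row S A i"
  shows "per_on S (unit_diag A) \<le> per_bound (offdiag_sum S A)"
proof -
  define \<phi> where "\<phi> i = (SOME c. \<forall>k\<in>S. k \<noteq> i \<longrightarrow> k \<noteq> c \<longrightarrow> A i k = 0)" for i
  define r where "r i = (\<Sum>k\<in>S-{i}. A i k)" for i
  have phi: "A i k = 0" if "i \<in> S" "k \<in> S" "k \<noteq> i" "k \<noteq> \<phi> i" for i k
  proof -
    have "\<forall>k\<in>S. k \<noteq> i \<longrightarrow> k \<noteq> \<phi> i \<longrightarrow> A i k = 0"
      unfolding \<phi>_def using single[OF \<open>i \<in> S\<close>] unfolding single_offdiag_row_def by (rule someI_ex)
    then show ?thesis using that by blast
  qed
  have "unit_diag A i k = func_mat \<phi> r i k" if iS: "i \<in> S" and kS: "k \<in> S" for i k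
  proof (cases "i \<noteq> k \<and> k = \<phi> i")
    case True
    have "r i = A i k + (\<Sum>l\<in>S-{i}-{k}. A i l)"
      unfolding r_def using fS kS True by (simp add: sum.remove)
    also have "(\<Sum>l\<in>S-{i}-{k}. A i l) = 0"
      using phi[OF iS] True by (intro sum.neutral) auto
    finally show ?thesis using True by (simp add: unit_diag_def func_mat_def)
  qed (use phi[OF iS kS] in \<open>auto simp: unit_diag_def func_mat_def\<close>)
  then have "per_on S (unit_diag A) = per_on S (func_mat \<phi> r)" by (rule per_on_cong)
  also have "\<dots> \<le> per_bound (\<Sum>i\<in>S. r i)"
    using rs nn unfolding r_def by (intro per_on_func_mat_le[OF fS]) (auto intro: sum_nonneg)
  finally show ?thesis by (simp add: offdiag_sum_def r_def)
qed

lemma per_on_unit_diag_concentrate_row: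
  fixes S :: "nat set" and A :: mat and i :: nat
  defines "r \<equiv> \<Sum>m\<in>S-{i}. A i m"
  assumes fS: "finite S" and iS: "i \<in> S" and r0: "r \<noteq> 0"
  shows "per_on S (unit_diag A) = (\<Sum>k\<in>S-{i}. (A i k / r) * per_on S (unit_diag (concentrate_row S A i k)))"
proof (rule per_on_row_linear[OF fS iS])
  fix l assume lS: "l \<in> S"
  show "unit_diag A i l = (\<Sum>k\<in>S-{i}. A i k / r * unit_diag (concentrate_row S A i k) i l)"
  proof (cases "l = i")
    case True
    then show ?thesis using r0 by (simp add: unit_diag_def sum_divide_distrib[symmetric] r_def)
  next
    case False
    then have "(\<Sum>k\<in>S-{i}. A i k / r * unit_diag (concentrate_row S A i k) i l)
        = (\<Sum>k\<in>S-{i}. if k = l then A i k else 0)"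
      using r0 by (intro sum.cong) (auto simp: unit_diag_def concentrate_row_def r_def)
    also have "\<dots> = A i l" using fS lS False by simp
    finally show ?thesis using False by (simp add: unit_diag_def)
  qed
qed (simp add: unit_diag_def concentrate_row_def)

lemma offdiag_row_sum_concentrate_row:
  assumes "finite S" "k \<in> S - {i}"
  shows "(\<Sum>l\<in>S-{j}. concentrate_row S A i k j l) = (\<Sum>l\<in>S-{j}. A j l)"
  using assms by (cases "j = i") (simp_all add: concentrate_row_def)

lemma offdiag_sum_concentrate_row:
  assumes "finite S" "k \<in> S - {i}"
  shows "offdiag_sum S (concentrate_row S A i k) = offdiag_sum S A"
  unfolding offdiag_sum_def using offdiag_row_sum_concentrate_row[OF assms] by simp

lemma card_multi_offdiag_rows_concentrate_row:
  assumes fS: "finite S" and iS: "i \<in> S" and multi: "\<not> single_offdiag_row S A i"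
    and k: "k \<in> S - {i}"
  shows "card {j\<in>S. \<not> single_offdiag_row S (concentrate_row S A i k) j}
    < card {j\<in>S. \<not> single_offdiag_row S A j}"
proof -
  let ?Y = "concentrate_row S A i k"
  let ?multi = "\<lambda>B. {j\<in>S. \<not> single_offdiag_row S B j}"
  have Yi: "single_offdiag_row S ?Y i"
    unfolding single_offdiag_row_def concentrate_row_def by (auto intro!: exI[of _ k])
  have Yj: "single_offdiag_row S ?Y j = single_offdiag_row S A j" if "j \<noteq> i" for j
    using that by (simp add: single_offdiag_row_def concentrate_row_def)
  have "?multi ?Y \<subseteq> ?multi A - {i}"
  proof
    fix j assume j: "j \<in> ?multi ?Y"
    with Yi have "j \<noteq> i" by auto
    with j Yj[of j] show "j \<in> ?multi A - {i}" by simp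
  qed
  then have "card (?multi ?Y) \<le> card (?multi A - {i})" using fS by (intro card_mono) auto
  also have "\<dots> < card (?multi A)" using fS iS multi by (intro card_Diff1_less) auto
  finally show ?thesis .
qed

lemma per_on_unit_diag_le:
  assumes fS: "finite S"
    and nn: "\<And>i k. i \<in> S \<Longrightarrow> k \<in> S \<Longrightarrow> i \<noteq> k \<Longrightarrow> 0 \<le> A i k"
    and rs: "\<And>i. i \<in> S \<Longrightarrow> (\<Sum>k\<in>S-{i}. A i k) \<le> 1"
  shows "per_on S (unit_diag A) \<le> per_bound (offdiag_sum S A)"
  using nn rs
proof (induction "card {i\<in>S. \<not> single_offdiag_row S A i}" arbitrary: A rule: less_induct)
  case less
  show ?case
  proof (cases "\<forall>i\<in>S. single_offdiag_row S A i")
    case True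
    then show ?thesis
      by (intro per_on_unit_diag_single_offdiag_le[OF fS less.prems(1) less.prems(2)]) auto
  next
    case False
    then obtain i where iS: "i \<in> S" and multi: "\<not> single_offdiag_row S A i" by blast
    define r where "r = (\<Sum>k\<in>S-{i}. A i k)"
    have "r = 0 \<longleftrightarrow> (\<forall>k\<in>S-{i}. A i k = 0)"
      unfolding r_def using fS less.prems(1) iS by (intro sum_nonneg_eq_0_iff) auto
    moreover have "0 \<le> r" unfolding r_def using less.prems(1) iS by (intro sum_nonneg) auto
    ultimately have r0: "0 < r" using multi unfolding single_offdiag_row_def by force
    have bound: "per_on S (unit_diag (concentrate_row S A i k)) \<le> per_bound (offdiag_sum S A)"
      if k: "k \<in> S - {i}" for k
    proof -
      let ?Y = "concentrate_row S A i k"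
      have "card {j\<in>S. \<not> single_offdiag_row S ?Y j} < card {j\<in>S. \<not> single_offdiag_row S A j}"
        using fS iS multi k by (rule card_multi_offdiag_rows_concentrate_row)
      moreover have "0 \<le> ?Y j l" if "j \<in> S" "l \<in> S" "j \<noteq> l" for j l
        using less.prems(1) iS that by (cases "j = i") (auto simp: concentrate_row_def intro!: sum_nonneg)
      moreover have "(\<Sum>l\<in>S-{j}. ?Y j l) \<le> 1" if "j \<in> S" for j
        using less.prems(2)[OF that] offdiag_row_sum_concentrate_row[OF fS k] by simp
      ultimately have "per_on S (unit_diag ?Y) \<le> per_bound (offdiag_sum S ?Y)"
        by (rule less.hyps)
      then show ?thesis unfolding offdiag_sum_concentrate_row[OF fS k] .
    qed
    have "per_on S (unit_diag A) = (\<Sum>k\<in>S-{i}. (A i k / r) * per_on S (unit_diag (concentrate_row S A i k)))"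
      using fS iS r0 unfolding r_def by (intro per_on_unit_diag_concentrate_row) auto
    also have "\<dots> \<le> (\<Sum>k\<in>S-{i}. (A i k / r) * per_bound (offdiag_sum S A))"
      using bound less.prems(1) iS r0 by (intro sum_mono mult_left_mono) auto
    also have "\<dots> = per_bound (offdiag_sum S A)"
      using r0 by (simp add: sum_distrib_right[symmetric] sum_divide_distrib[symmetric] r_def)
    finally show ?thesis .
  qed
qed

lemma per_identity_minus_le_per_on_unit_diag:
  assumes nn: "\<And>i k. i < n \<Longrightarrow> k < n \<Longrightarrow> 0 \<le> A i k" and dg: "\<And>i. i < n \<Longrightarrow> A i i \<le> 1"
  shows "per n (msub idm A) \<le> per_on {..<n} (unit_diag A)"
  unfolding per_eq_per_on per_on_def
proof (rule sum_mono)
  fix p assume "p \<in> {p. p permutes {..<n}}"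
  then have pin: "\<And>i. i < n \<Longrightarrow> p i < n" using permutes_in_image by fastforce
  have "(\<Prod>i<n. msub idm A i (p i)) \<le> (\<Prod>i<n. \<bar>msub idm A i (p i)\<bar>)"
    unfolding abs_prod[symmetric] by simp
  also have "\<dots> \<le> (\<Prod>i<n. unit_diag A i (p i))"
    using nn dg pin by (intro prod_mono) (auto simp: msub_def idm_def unit_diag_def)
  finally show "(\<Prod>i<n. msub idm A i (p i)) \<le> (\<Prod>i<n. unit_diag A i (p i))" .
qed

lemma per_identity_minus_le_per_bound:
  assumes "A \<in> tilde_omega n s"
  shows "per n (msub idm A) \<le> per_bound s"
proof -
  have nn: "\<And>i k. i < n \<Longrightarrow> k < n \<Longrightarrow> 0 \<le> A i k" and rs: "\<And>i. i < n \<Longrightarrow> (\<Sum>k<n. A i k) \<le> 1"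
    and "msum n A = s"
    using assms by (auto simp: tilde_omega_def row_substochastic_def)
  have offdiag_le_row: "(\<Sum>k\<in>{..<n}-{i}. A i k) \<le> (\<Sum>k<n. A i k)" for i
    using nn by (cases "i < n") (auto intro: sum_mono2)
  have "A i i \<le> 1" if "i < n" for i
    using member_le_sum[of i "{..<n}" "A i"] nn rs[OF that] that by simp
  then have "per n (msub idm A) \<le> per_on {..<n} (unit_diag A)"
    using nn by (intro per_identity_minus_le_per_on_unit_diag)
  also have "\<dots> \<le> per_bound (offdiag_sum {..<n} A)"
    using nn rs offdiag_le_row by (intro per_on_unit_diag_le) (auto intro: order_trans[OF offdiag_le_row])
  also have "\<dots> \<le> per_bound s"
  proof (rule per_bound_mono)
    show "0 \<le> offdiag_sum {..<n} A" unfolding offdiag_sum_def using nn by (auto intro!: sum_nonneg)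
    show "offdiag_sum {..<n} A \<le> s"
      unfolding offdiag_sum_def \<open>msum n A = s\<close>[symmetric] msum_def
      using offdiag_le_row by (intro sum_mono) auto
  qed
  finally show ?thesis .
qed

definition partner :: "nat \<Rightarrow> nat" where
  "partner i = (if even i then Suc i else i - 1)"

lemma partner_partner [simp]: "partner (partner i) = i"
  by (simp add: partner_def)

lemma partner_eq_iff: "j = partner i \<longleftrightarrow> i = partner j"
  by (metis partner_partner)

lemma partner_Suc_Suc [simp]: "partner (Suc (Suc i)) = Suc (Suc (partner i))"
  by (cases "even i") (simp_all add: partner_def)

lemma partner_less_double_iff: "partner i < 2 * M \<longleftrightarrow> i < 2 * M"
proof (cases "even i")
  case True
  then show ?thesis by (auto simp: partner_def elim!: evenE)
next
  case False
  then show ?thesis by (auto simp: partner_def elim!: oddE)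
qed

definition pair_mat :: "(nat \<Rightarrow> real) \<Rightarrow> mat" where
  "pair_mat g i j = (if j = partner i then g i else 0)"

lemma dsum_S2_pair_mat:
  "dsum 2 (S2 x) (pair_mat g) = pair_mat (\<lambda>i. if i < 2 then x else g (i - 2))"
proof (intro ext)
  fix i j :: nat
  consider "i < 2" "j < 2" | "2 \<le> i" "2 \<le> j" | "i < 2 \<longleftrightarrow> \<not> j < 2" by linarith
  then show "dsum 2 (S2 x) (pair_mat g) i j = pair_mat (\<lambda>i. if i < 2 then x else g (i - 2)) i j"
  proof cases
    case 1
    then have "j = partner i \<longleftrightarrow> i \<noteq> j" by (auto simp: partner_def less_2_cases_iff)
    with 1 show ?thesis by (simp add: dsum_def S2_def pair_mat_def)
  next
    case 2
    then obtain i' j' where "i = i' + 2" "j = j' + 2" by (metis add.commute le_Suc_ex)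
    then show ?thesis by (simp add: dsum_def pair_mat_def)
  next
    case 3
    then have "j \<noteq> partner i" using partner_less_double_iff[of i 1] by auto
    with 3 show ?thesis by (auto simp: dsum_def pair_mat_def)
  qed
qed

lemma copies2_M2_eq_pair_mat:
  "copies2 K M2 (dsum 2 (S2 c) zero_mat)
    = pair_mat (\<lambda>i. if i < 2*K then 1 else if i < 2*K+2 then c else 0)"
proof (induction K)
  case 0
  have zero: "zero_mat = pair_mat (\<lambda>_. 0)" by (simp add: fun_eq_iff zero_mat_def pair_mat_def)
  show ?case
    unfolding copies2.simps zero dsum_S2_pair_mat by (rule arg_cong[where f = pair_mat]) auto
next
  case (Suc K)
  have M2: "M2 = S2 1" by (simp add: fun_eq_iff M2_def S2_def)
  show ?case
    unfolding copies2.simps Suc unfolding M2 dsum_S2_pair_mat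
    by (rule arg_cong[where f = pair_mat]) (auto simp: fun_eq_iff)
qed

lemma partner_neq [simp]: "partner i \<noteq> i" "i \<noteq> partner i"
  by (cases "even i"; auto simp: partner_def elim: oddE)+

lemma
  assumes n: "2 * M \<le> n" and g: "\<And>i. 2 * M \<le> i \<Longrightarrow> g i = 0"
  shows sum_pair_mat_row: "(\<Sum>j<n. pair_mat g i j) = g i"
    and sum_pair_mat_col: "(\<Sum>i<n. pair_mat g i j) = g (partner j)"
proof -
  have "g i = 0" if "n \<le> partner i" for i
    using that n g partner_less_double_iff[of i M] by fastforce
  moreover have "g i = 0" if "n \<le> i" for i
    using that n g by simp
  ultimately show "(\<Sum>j<n. pair_mat g i j) = g i" and "(\<Sum>i<n. pair_mat g i j) = g (partner j)"
    using partner_eq_iff[of j] by (auto simp: pair_mat_def not_less)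
qed

lemma msum_pair_mat:
  assumes n: "2 * M \<le> n" and g: "\<And>i. 2 * M \<le> i \<Longrightarrow> g i = 0"
  shows "msum n (pair_mat g) = (\<Sum>i<2*M. g i)"
proof -
  have "msum n (pair_mat g) = (\<Sum>i<n. g i)"
    unfolding msum_def using sum_pair_mat_row[OF assms] by simp
  also have "\<dots> = (\<Sum>i<2*M. g i)"
    using n g by (intro sum.mono_neutral_right) auto
  finally show ?thesis .
qed

lemma per_pair_mat:
  assumes n: "2 * M \<le> n" and g: "\<And>i. 2 * M \<le> i \<Longrightarrow> g i = 0"
  shows "per n (msub idm (pair_mat g)) = (\<Prod>k<M. 1 + g (2*k) * g (2*k+1))"
proof -
  define X where "X = msub idm (pair_mat g)"
  have X: "X i k = (if i = k then 1 else if k = partner i then - g i else 0)" for i k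
    by (auto simp: X_def msub_def idm_def pair_mat_def)
  have pair: "per_on {2*m..<n} X = (1 + g (2*m) * g (2*m+1)) * per_on {2*Suc m..<n} X"
    if "m < M" for m
  proof -
    have partners: "partner (2*m) = Suc (2*m)" "partner (Suc (2*m)) = 2*m" by (simp_all add: partner_def)
    then have inv: "partner k = Suc (2*m) \<Longrightarrow> k = 2*m" "partner k = 2*m \<Longrightarrow> k = Suc (2*m)" for k
      by (metis partner_partner)+
    have "per_on {2*m..<n} X = (X (2*m) (2*m) * X (2*m+1) (2*m+1) + X (2*m) (2*m+1) * X (2*m+1) (2*m))
        * per_on ({2*m..<n} - {2*m, 2*m+1}) X"
      using that n by (intro per_on_pair) (auto simp: X partners dest: inv inv[OF sym])
    also have "{2*m..<n} - {2*m, 2*m+1} = {2*Suc m..<n}" by auto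
    also have "X (2*m) (2*m) * X (2*m+1) (2*m+1) + X (2*m) (2*m+1) * X (2*m+1) (2*m)
        = 1 + g (2*m) * g (2*m+1)"
      by (simp add: X partners)
    finally show ?thesis .
  qed
  have "per_on {2*m..<n} X = (\<Prod>k\<in>{m..<M}. 1 + g (2*k) * g (2*k+1))" if "m \<le> M" for m
    using that
  proof (induction m rule: inc_induct)
    case base
    have "per_on {2*M..<n} X = (\<Prod>i\<in>{2*M..<n}. X i i)"
      using g by (intro per_on_diagonal) (auto simp: X)
    also have "\<dots> = 1" by (simp add: X)
    finally show ?case by simp
  next
    case (step m)
    then show ?case using pair[of m] by (simp add: prod.atLeast_Suc_lessThan)
  qed
  from this[of 0] show ?thesis by (simp add: per_eq_per_on X_def atLeast0LessThan)
qed

lemma pair_mat_attains: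
  fixes K n :: nat and c :: real
  assumes c: "0 \<le> c" "c < 1" and Kn: "2*K \<le> n" and cn: "c \<noteq> 0 \<Longrightarrow> 2*K + 2 \<le> n"
  defines "g \<equiv> \<lambda>i. if i < 2*K then 1 else if i < 2*K + 2 then c else 0"
  shows "pair_mat g \<in> tilde_omega n (2*K + 2*c) \<and> doubly_substochastic n (pair_mat g)
    \<and> per n (msub idm (pair_mat g)) = 2^K * (1 + c^2)"
proof -
  obtain M where n: "2*M \<le> n" and g0: "\<And>i. 2*M \<le> i \<Longrightarrow> g i = 0"
    and sum: "(\<Sum>i<2*M. g i) = 2*K + 2*c" and prod: "(\<Prod>k<M. 1 + g (2*k) * g (2*k+1)) = 2^K * (1 + c^2)"
  proof (cases "c = 0")
    case True
    show ?thesis by (rule that[of K]) (use Kn True in \<open>auto simp: g_def\<close>)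
  next
    case False
    have "(\<Sum>i<2*Suc K. g i) = (\<Sum>i<2*K. g i) + g (2*K) + g (2*K+1)" by simp
    moreover have "(\<Prod>k<Suc K. 1 + g (2*k) * g (2*k+1)) = (\<Prod>k<K. 1 + g (2*k) * g (2*k+1)) * (1 + c*c)"
      by (simp add: g_def)
    ultimately show ?thesis
      by (intro that[of "Suc K"]) (use cn[OF False] in \<open>auto simp: g_def power2_eq_square\<close>)
  qed
  have g01: "0 \<le> g i" "g i \<le> 1" for i using c by (auto simp: g_def)
  have g_partner: "g (partner j) = g j" for j
    using partner_less_double_iff[of j K] partner_less_double_iff[of j "Suc K"] by (simp add: g_def)
  have "row_substochastic n (pair_mat g)"
    using g01 sum_pair_mat_row[OF n g0] by (auto simp: row_substochastic_def pair_mat_def)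
  moreover have "doubly_substochastic n (pair_mat g)"
    using calculation g01 sum_pair_mat_col[OF n g0] g_partner by (simp add: doubly_substochastic_def)
  ultimately show ?thesis
    using msum_pair_mat[OF n g0] per_pair_mat[OF n g0] sum prod by (simp add: tilde_omega_def)
qed

lemma pairs_fit:
  fixes n :: nat and s :: real
  assumes "0 \<le> s" and "(even n \<and> s \<le> real n) \<or> (odd n \<and> s \<le> real n - 1)"
  shows "2 * nat \<lfloor>s/2\<rfloor> \<le> n" and "s/2 \<noteq> \<lfloor>s/2\<rfloor> \<Longrightarrow> 2 * nat \<lfloor>s/2\<rfloor> + 2 \<le> n"
proof -
  have K: "real (2 * nat \<lfloor>s/2\<rfloor>) = 2 * \<lfloor>s/2\<rfloor>" using assms(1) by simp
  have "s \<le> real (2 * (n div 2))"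
    using assms(2) by (auto elim!: evenE oddE)
  then show "2 * nat \<lfloor>s/2\<rfloor> \<le> n"
    using K of_nat_le_iff[of "2 * nat \<lfloor>s/2\<rfloor>" "2 * (n div 2)"] by linarith
  assume "s/2 \<noteq> \<lfloor>s/2\<rfloor>"
  then have "real (2 * nat \<lfloor>s/2\<rfloor>) < real (2 * (n div 2))"
    using K \<open>s \<le> _\<close> by linarith
  then have "nat \<lfloor>s/2\<rfloor> < n div 2" by simp
  moreover have "2 * (n div 2) \<le> n" by simp
  ultimately show "2 * nat \<lfloor>s/2\<rfloor> + 2 \<le> n" by linarith
qed

theorem mainTheorem12:
  fixes n :: nat and s :: real
  assumes "n \<ge> 1" and "s \<ge> 0"
    and "(even n \<and> s \<le> real n) \<or> (odd n \<and> s \<le> real n - 1)"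
  defines "e \<equiv> greatest_even_le s"
  defines "W \<equiv> copies2 (nat (e div 2)) M2 (dsum 2 (S2 ((s - real_of_int e) / 2)) zero_mat)"
  shows "(\<forall>A\<in>tilde_omega n s.
            per n (msub idm A) \<le> 2 ^ nat (e div 2) * (1 + ((s - real_of_int e) / 2)^2))
         \<and> W \<in> tilde_omega n s \<and> doubly_substochastic n W
         \<and> per n (msub idm W) = 2 ^ nat (e div 2) * (1 + ((s - real_of_int e) / 2)^2)"
proof -
  define K where "K = nat \<lfloor>s/2\<rfloor>"
  define c where "c = s/2 - \<lfloor>s/2\<rfloor>"
  have K: "nat (e div 2) = K" and c: "(s - real_of_int e) / 2 = c"
    unfolding e_def greatest_even_le_eq K_def c_def by simp_all
  have "real K = \<lfloor>s/2\<rfloor>" using \<open>s \<ge> 0\<close> by (simp add: K_def)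
  then have "s = 2*K + 2*c" by (simp add: c_def)
  moreover have "0 \<le> c" "c < 1" unfolding c_def by linarith+
  have fit: "2*K \<le> n" "c \<noteq> 0 \<Longrightarrow> 2*K + 2 \<le> n"
    using pairs_fit[OF assms(2,3)] unfolding K_def c_def by auto
  have "W = pair_mat (\<lambda>i. if i < 2*K then 1 else if i < 2*K + 2 then c else 0)"
    unfolding W_def K c by (rule copies2_M2_eq_pair_mat)
  with pair_mat_attains[OF \<open>0 \<le> c\<close> \<open>c < 1\<close> fit] \<open>s = 2*K + 2*c\<close>
  have "W \<in> tilde_omega n s \<and> doubly_substochastic n W \<and> per n (msub idm W) = 2^K * (1 + c^2)"
    by simp
  moreover have "per_bound s = 2^K * (1 + c^2)" unfolding per_bound_def K_def c_def ..
  ultimately show ?thesis unfolding K c using per_identity_minus_le_per_bound[of _ n s] by auto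
qed

end
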